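(* Consider a discounted Markov decision problem with discount factor $\gamma\in(0,1)$ and the inexact policy mirror descent method as described in the context, with $\pi^{(0)}\in\operatorname{rint}\Pi$, and suppose that $\|\widehat Q(\pi^{(k)})-Q(\pi^{(k)})\|_\infty\le\tau$ for all $k\ge0$. Let $\rho\in\Delta(\mathcal{S})$ and $\vartheta_\rho=\frac1{1-\gamma}\|d_\rho(\pi^\star)/\rho\|_\infty$. If the (positive) step sizes satisfy $\eta_0\ge\frac{1-\gamma}{\gamma}D^\star_0$ and $\eta_{k+1}\ge\eta_k/\gamma$ for all $k\ge0$, then for all $k\ge0$, \[ V_\rho(\pi^{(k)})-V_\rho^\star\le\Bigl(1-\frac1{\vartheta_\rho}\Bigr)^k\frac2{1-\gamma}+\frac{4\vartheta_\rho}{1-\gamma}\tau . \]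
   Context: A discounted Markov decision problem (cost-minimization form): finite state set $\mathcal{S}$, finite action set $\mathcal{A}$, transition probabilities $P(s'|s,a)$, cost $R:\mathcal{S}\times\mathcal{A}\to[0,1]$, discount $\gamma$. Policies $\Pi=\Delta(\mathcal{A})^{|\mathcal{S}|}$; $\operatorname{rint}\Pi$ is the set of policies with all entries $\pi_{s,a}>0$. $V_s(\pi)=\mathbf{E}\bigl[\sum_{t\ge0}\gamma^tR(s_t,a_t)\mid s_0=s\bigr]$ with $a_t\sim\pi_{s_t}$, $s_{t+1}\sim P(\cdot|s_t,a_t)$; $V_\rho(\pi)=\sum_s\rho_sV_s(\pi)$; $V_\rho^\star=\min_{\pi\in\Pi}V_\rho(\pi)$; $\pi^\star$ denotes a policy minimizing $V_s$ simultaneously for all $s$. $Q_{s,a}(\pi)=R_{s,a}+\gamma\sum_{s'}P(s'|s,a)V_{s'}(\pi)$. Discounted state visitation: $d_{s,s'}(\pi)=(1-\gamma)\sum_{t\ge0}\gamma^t\Pr^\pi(s_t=s'\mid s_0=s)$, $d_{\rho,s'}(\pi)=\sum_s\rho_sd_{s,s'}(\pi)$. For $p,q\in\Delta(\mathcal{S})$, $\|p/q\|_\infty=\max_sp_s/q_s$ with $0/0=1$. Bregman divergence: $h:\mathbf{R}^{|\mathcal{A}|}\to\mathbf{R}\cup\{+\infty\}$ is a convex function of Legendre type (proper, closed, essentially smooth, strictly convex on the relative interior of its domain) with $\Delta(\mathcal{A})\subseteq\operatorname{dom}h$ and $\operatorname{rint}\Delta(\mathcal{A})\subseteq\operatorname{rint}\operatorname{dom}h$;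 $D(p,p')=h(p)-h(p')-\langle\nabla h(p'),p-p'\rangle$. Inexact policy mirror descent: given estimates $\widehat Q(\pi^{(k)})\in\mathbf{R}^{|\mathcal{S}|\times|\mathcal{A}|}$ of $Q(\pi^{(k)})$, for each $s$, $\pi^{(k+1)}_s=\arg\min_{p\in\Delta(\mathcal{A})}\{\eta_k\langle\widehat Q_s(\pi^{(k)}),p\rangle+D(p,\pi^{(k)}_s)\}$. Notation: $D^\star_k=\sum_sd_{\rho,s}(\pi^\star)D(\pi^\star_s,\pi^{(k)}_s)$. *)

theory Defs
  imports "HOL-Analysis.Analysis"
begin

definition prob_simplex :: "('x::finite \<Rightarrow> real) set" where
  "prob_simplex = {p. (\<forall>x. 0 \<le> p x) \<and> (\<Sum>x\<in>UNIV. p x) = 1}"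

definition policies :: "('s::finite \<Rightarrow> 'a::finite \<Rightarrow> real) set" where
  "policies = {\<pi>. \<forall>s. \<pi> s \<in> prob_simplex}"

definition rint_policies :: "('s::finite \<Rightarrow> 'a::finite \<Rightarrow> real) set" where
  "rint_policies = {\<pi>. \<pi> \<in> policies \<and> (\<forall>s a. 0 < \<pi> s a)}"

text \<open>Pr^pi(s_t = s' | s_0 = s).\<close>
fun state_prob :: "('s::finite \<Rightarrow> 'a::finite \<Rightarrow> 's \<Rightarrow> real) \<Rightarrow> ('s \<Rightarrow> 'a \<Rightarrow> real)
     \<Rightarrow> 's \<Rightarrow> nat \<Rightarrow> 's \<Rightarrow> real" where
  "state_prob P \<pi> s 0 s' = (if s' = s then 1 else 0)"
| "state_prob P \<pi> s (Suc t) s' =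
     (\<Sum>s''\<in>UNIV. state_prob P \<pi> s t s'' * (\<Sum>a\<in>UNIV. \<pi> s'' a * P s'' a s'))"

definition V :: "('s::finite \<Rightarrow> 'a::finite \<Rightarrow> 's \<Rightarrow> real) \<Rightarrow> ('s \<Rightarrow> 'a \<Rightarrow> real) \<Rightarrow> real
     \<Rightarrow> ('s \<Rightarrow> 'a \<Rightarrow> real) \<Rightarrow> 's \<Rightarrow> real" where
  "V P R \<gamma> \<pi> s = (\<Sum>t. \<gamma> ^ t *
      (\<Sum>s'\<in>UNIV. state_prob P \<pi> s t s' * (\<Sum>a\<in>UNIV. \<pi> s' a * R s' a)))"

definition V_rho :: "('s::finite \<Rightarrow> 'a::finite \<Rightarrow> 's \<Rightarrow> real) \<Rightarrow> ('s \<Rightarrow> 'a \<Rightarrow> real) \<Rightarrow> real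
     \<Rightarrow> ('s \<Rightarrow> real) \<Rightarrow> ('s \<Rightarrow> 'a \<Rightarrow> real) \<Rightarrow> real" where
  "V_rho P R \<gamma> \<rho> \<pi> = (\<Sum>s\<in>UNIV. \<rho> s * V P R \<gamma> \<pi> s)"

definition V_rho_star :: "('s::finite \<Rightarrow> 'a::finite \<Rightarrow> 's \<Rightarrow> real) \<Rightarrow> ('s \<Rightarrow> 'a \<Rightarrow> real) \<Rightarrow> real
     \<Rightarrow> ('s \<Rightarrow> real) \<Rightarrow> real" where
  "V_rho_star P R \<gamma> \<rho> = Inf (V_rho P R \<gamma> \<rho> ` policies)"

definition Q :: "('s::finite \<Rightarrow> 'a::finite \<Rightarrow> 's \<Rightarrow> real) \<Rightarrow> ('s \<Rightarrow> 'a \<Rightarrow> real) \<Rightarrow> real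
     \<Rightarrow> ('s \<Rightarrow> 'a \<Rightarrow> real) \<Rightarrow> 's \<Rightarrow> 'a \<Rightarrow> real" where
  "Q P R \<gamma> \<pi> s a = R s a + \<gamma> * (\<Sum>s'\<in>UNIV. P s a s' * V P R \<gamma> \<pi> s')"

definition visit :: "('s::finite \<Rightarrow> 'a::finite \<Rightarrow> 's \<Rightarrow> real) \<Rightarrow> real
     \<Rightarrow> ('s \<Rightarrow> 'a \<Rightarrow> real) \<Rightarrow> 's \<Rightarrow> 's \<Rightarrow> real" where
  "visit P \<gamma> \<pi> s s' = (1 - \<gamma>) * (\<Sum>t. \<gamma> ^ t * state_prob P \<pi> s t s')"

definition visit_rho :: "('s::finite \<Rightarrow> 'a::finite \<Rightarrow> 's \<Rightarrow> real) \<Rightarrow> real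
     \<Rightarrow> ('s \<Rightarrow> real) \<Rightarrow> ('s \<Rightarrow> 'a \<Rightarrow> real) \<Rightarrow> 's \<Rightarrow> real" where
  "visit_rho P \<gamma> \<rho> \<pi> s' = (\<Sum>s\<in>UNIV. \<rho> s * visit P \<gamma> \<pi> s s')"

text \<open>||p/q||_infty = max_s p_s/q_s with 0/0 = 1 (and c/0 = +infinity for c > 0).\<close>
definition ratio_norm :: "('s::finite \<Rightarrow> real) \<Rightarrow> ('s \<Rightarrow> real) \<Rightarrow> ereal" where
  "ratio_norm p q = Max (range (\<lambda>s. if q s = 0 then (if p s = 0 then 1 else \<infinity>)
                                    else ereal (p s / q s)))"

definition edom :: "('x::euclidean_space \<Rightarrow> ereal) \<Rightarrow> 'x set" where
  "edom h = {x. h x < \<infinity>}"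

definition grad :: "('x::euclidean_space \<Rightarrow> ereal) \<Rightarrow> 'x \<Rightarrow> 'x" where
  "grad h x = (SOME g. GDERIV (\<lambda>y. real_of_ereal (h y)) x :> g)"

definition strictly_convex_on :: "'x::real_vector set \<Rightarrow> ('x \<Rightarrow> real) \<Rightarrow> bool" where
  "strictly_convex_on S f \<longleftrightarrow> (\<forall>x\<in>S. \<forall>y\<in>S. \<forall>u::real. x \<noteq> y \<and> 0 < u \<and> u < 1 \<longrightarrow>
      f ((1 - u) *\<^sub>R x + u *\<^sub>R y) < (1 - u) * f x + u * f y)"

text \<open>Convex function of Legendre type (Rockafellar, Sect. 26): proper, closed, convex,
  essentially smooth and strictly convex on the (relative) interior of its domain.\<close>
definition legendre :: "('x::euclidean_space \<Rightarrow> ereal) \<Rightarrow> bool" where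
  "legendre h \<longleftrightarrow>
     \<comment> \<open>proper\<close>
     (\<forall>x. h x \<noteq> -\<infinity>) \<and> edom h \<noteq> {} \<and>
     \<comment> \<open>closed (closed epigraph)\<close>
     closed {(x, t::real). h x \<le> ereal t} \<and>
     \<comment> \<open>convex\<close>
     convex (edom h) \<and> convex_on (edom h) (\<lambda>x. real_of_ereal (h x)) \<and>
     \<comment> \<open>essentially smooth\<close>
     interior (edom h) \<noteq> {} \<and>
     (\<forall>x\<in>interior (edom h). (\<lambda>y. real_of_ereal (h y)) differentiable (at x)) \<and>
     (\<forall>X x. (\<forall>n. X n \<in> interior (edom h)) \<longrightarrow> X \<longlonglongrightarrow> x \<longrightarrow> x \<notin> interior (edom h) \<longrightarrow>
        filterlim (\<lambda>n. norm (grad h (X n))) at_top sequentially) \<and>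
     \<comment> \<open>strictly convex on the relative interior of the domain\<close>
     strictly_convex_on (rel_interior (edom h)) (\<lambda>x. real_of_ereal (h x))"

definition vec_of :: "('a::finite \<Rightarrow> real) \<Rightarrow> real ^ 'a" where
  "vec_of p = (\<chi> a. p a)"

definition bregman :: "(real ^ 'a::finite \<Rightarrow> ereal) \<Rightarrow> ('a \<Rightarrow> real) \<Rightarrow> ('a \<Rightarrow> real) \<Rightarrow> real" where
  "bregman h p p' = real_of_ereal (h (vec_of p)) - real_of_ereal (h (vec_of p'))
                    - inner (grad h (vec_of p')) (vec_of p - vec_of p')"

end

theory Submission
  imports Defs
begin

(* Each mirror step satisfies the three-point inequality of the Bregman divergence D. With the
   previous iterate as comparator it shows that the step decreases the estimated Q-values at every
   state; with an optimal policy pi_star as comparator it bounds the estimated advantage of pi_k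
   over pi_star by the decrease of D_k = sum_s d_rho(pi_star)_s D(pi_star_s, pi_k_s). The
   performance difference lemma turns both facts into statements about the gap
   Delta_k = V_rho(pi_k) - V_rho^star, up to errors of order tau; the constant
   M = ||d_rho(pi_star) / rho||_infty enters when the visitation distribution of the new policy,
   which dominates (1 - gamma) rho, is compared with d_rho(pi_star). Together they make the
   potential Delta_k + D_k / ((M - (1 - gamma)) eta_k) contract by the factor
   1 - (1 - gamma) / M = 1 - 1 / theta_rho up to an O(tau) error. Essential smoothness of h keeps
   every iterate in the interior of dom h, where the gradient defining D exists. *)

lemma prob_simplex_nonneg: "p \<in> prob_simplex \<Longrightarrow> 0 \<le> p x"
  by (simp add: prob_simplex_def)

lemma prob_simplex_sum: "p \<in> prob_simplex \<Longrightarrow> (\<Sum>x\<in>UNIV. p x) = 1"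
  by (simp add: prob_simplex_def)

lemma prob_simplex_le_one:
  assumes p: "p \<in> prob_simplex"
  shows "p x \<le> 1"
proof -
  have "p x \<le> (\<Sum>y\<in>UNIV. p y)"
    by (rule member_le_sum) (auto simp: prob_simplex_nonneg[OF p])
  then show ?thesis using prob_simplex_sum[OF p] by simp
qed

lemma prob_simplex_weighted_le:
  assumes p: "p \<in> prob_simplex" and f: "\<And>x. f x \<le> c"
  shows "(\<Sum>x\<in>UNIV. p x * f x) \<le> c"
proof -
  have "(\<Sum>x\<in>UNIV. p x * f x) \<le> (\<Sum>x\<in>UNIV. p x * c)"
    by (intro sum_mono mult_left_mono f prob_simplex_nonneg[OF p])
  also have "\<dots> = c"
    using prob_simplex_sum[OF p] by (simp add: sum_distrib_right[symmetric])
  finally show ?thesis .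
qed

lemma prob_simplex_weighted_ge:
  assumes p: "p \<in> prob_simplex" and f: "\<And>x. c \<le> f x"
  shows "c \<le> (\<Sum>x\<in>UNIV. p x * f x)"
  using prob_simplex_weighted_le[OF p, of "\<lambda>x. - f x" "- c"] f
  by (simp add: sum_negf)

lemma prob_simplex_weighted_abs_le:
  assumes p: "p \<in> prob_simplex" and f: "\<And>x. \<bar>f x\<bar> \<le> c"
  shows "\<bar>\<Sum>x\<in>UNIV. p x * f x\<bar> \<le> c"
proof -
  have "f x \<le> c" "- c \<le> f x" for x using f[of x] by linarith+
  then have "(\<Sum>x\<in>UNIV. p x * f x) \<le> c" "- c \<le> (\<Sum>x\<in>UNIV. p x * f x)"
    using prob_simplex_weighted_le[OF p] prob_simplex_weighted_ge[OF p] by blast+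
  then show ?thesis by linarith
qed

lemma prob_simplex_diff_weighted_error:
  assumes p: "p \<in> prob_simplex" and p': "p' \<in> prob_simplex" and fg: "\<And>a. \<bar>f a - g a\<bar> \<le> \<tau>"
  shows "\<bar>(\<Sum>a\<in>UNIV. (p a - p' a) * f a) - (\<Sum>a\<in>UNIV. (p a - p' a) * g a)\<bar> \<le> 2 * \<tau>"
proof -
  have "(\<Sum>a\<in>UNIV. (p a - p' a) * f a) - (\<Sum>a\<in>UNIV. (p a - p' a) * g a)
      = (\<Sum>a\<in>UNIV. p a * (f a - g a)) - (\<Sum>a\<in>UNIV. p' a * (f a - g a))"
    by (simp add: algebra_simps sum_subtractf)
  then show ?thesis
    using prob_simplex_weighted_abs_le[OF p, of "\<lambda>a. f a - g a", OF fg]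
      prob_simplex_weighted_abs_le[OF p', of "\<lambda>a. f a - g a", OF fg] by linarith
qed

lemma prob_simplex_segment:
  assumes p: "p \<in> prob_simplex" and q: "q \<in> prob_simplex" and t: "0 \<le> t" "t \<le> 1"
  shows "(\<lambda>a. p a + t * (q a - p a)) \<in> prob_simplex"
proof -
  have "p a + t * (q a - p a) = (1 - t) * p a + t * q a" for a
    by (simp add: algebra_simps)
  then have "0 \<le> p a + t * (q a - p a)" for a
    using t prob_simplex_nonneg[OF p, of a] prob_simplex_nonneg[OF q, of a] by simp
  moreover have "(\<Sum>a\<in>UNIV. p a + t * (q a - p a)) = 1"
    using prob_simplex_sum[OF p] prob_simplex_sum[OF q]
    by (simp add: sum.distrib sum_subtractf sum_distrib_left[symmetric])
  ultimately show ?thesis by (simp add: prob_simplex_def)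
qed

lemma ratio_norm_ge_one:
  assumes p: "p \<in> prob_simplex" and q: "q \<in> prob_simplex"
  shows "1 \<le> ratio_norm p q"
proof -
  have "\<exists>s. q s \<le> p s"
  proof (rule ccontr)
    assume "\<nexists>s. q s \<le> p s"
    then have "(\<Sum>s\<in>UNIV. p s) < (\<Sum>s\<in>UNIV. q s)"
      by (intro sum_strict_mono) (auto simp: not_le)
    then show False using prob_simplex_sum[OF p] prob_simplex_sum[OF q] by simp
  qed
  then obtain s where s: "q s \<le> p s" ..
  let ?e = "\<lambda>s. if q s = 0 then (if p s = 0 then 1 else \<infinity>) else ereal (p s / q s)"
  have "1 \<le> ?e s"
  proof (cases "q s = 0")
    case False
    then have "0 < q s" using prob_simplex_nonneg[OF q, of s] by simp
    then show ?thesis using s False by simp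
  qed simp
  also have "?e s \<le> Max (range ?e)" by (rule Max_ge) auto
  finally show ?thesis unfolding ratio_norm_def .
qed

lemma ratio_norm_bound:
  assumes q: "\<And>s. 0 \<le> q s" and M: "ratio_norm p q = ereal M"
  shows "p s \<le> M * q s"
proof -
  let ?e = "\<lambda>s. if q s = 0 then (if p s = 0 then 1 else \<infinity>) else ereal (p s / q s)"
  have le: "?e s \<le> ereal M" unfolding M[symmetric] ratio_norm_def by (rule Max_ge) auto
  show ?thesis
  proof (cases "q s = 0")
    case True
    then show ?thesis using le by (auto split: if_splits)
  next
    case False
    then have "0 < q s" using q[of s] by simp
    then show ?thesis using le False by (simp add: divide_simps mult.commute)
  qed
qed

lemma summable_geometric_times_bounded:
  fixes g :: "nat \<Rightarrow> real"
  assumes \<gamma>: "0 \<le> \<gamma>" "\<gamma> < 1" and g: "\<And>t. \<bar>g t\<bar> \<le> B"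
  shows "summable (\<lambda>t. \<gamma> ^ t * g t)"
proof (rule summable_comparison_test')
  show "summable (\<lambda>t. B * \<gamma> ^ t)" using \<gamma> by (intro summable_mult summable_geometric) auto
  show "norm (\<gamma> ^ t * g t) \<le> B * \<gamma> ^ t" for t
    using \<gamma> g[of t] by (simp add: abs_mult mult.commute mult_right_mono)
qed

section \<open>Discounted Markov decision processes\<close>

locale mdp =
  fixes P :: "'s::finite \<Rightarrow> 'a::finite \<Rightarrow> 's \<Rightarrow> real"
    and R :: "'s \<Rightarrow> 'a \<Rightarrow> real"
    and \<gamma> :: real
  assumes P_stoch: "\<And>s a. P s a \<in> prob_simplex"
    and R_range: "\<And>s a. 0 \<le> R s a \<and> R s a \<le> 1"
    and gamma: "0 < \<gamma>" "\<gamma> < 1"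
begin

definition trans_kernel :: "('s \<Rightarrow> 'a \<Rightarrow> real) \<Rightarrow> 's \<Rightarrow> 's \<Rightarrow> real" where
  "trans_kernel \<pi> s s' = (\<Sum>a\<in>UNIV. \<pi> s a * P s a s')"

definition cost :: "('s \<Rightarrow> 'a \<Rightarrow> real) \<Rightarrow> 's \<Rightarrow> real" where
  "cost \<pi> s = (\<Sum>a\<in>UNIV. \<pi> s a * R s a)"

definition expect :: "('s \<Rightarrow> 'a \<Rightarrow> real) \<Rightarrow> 's \<Rightarrow> nat \<Rightarrow> ('s \<Rightarrow> real) \<Rightarrow> real" where
  "expect \<pi> s t f = (\<Sum>s'\<in>UNIV. state_prob P \<pi> s t s' * f s')"

lemma trans_kernel_simplex:
  assumes \<pi>: "\<pi> \<in> policies"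
  shows "trans_kernel \<pi> s \<in> prob_simplex"
proof -
  have "0 \<le> trans_kernel \<pi> s s'" for s'
    using \<pi> P_stoch unfolding trans_kernel_def policies_def
    by (intro sum_nonneg mult_nonneg_nonneg) (auto intro: prob_simplex_nonneg)
  moreover have "(\<Sum>s'\<in>UNIV. trans_kernel \<pi> s s') = (\<Sum>a\<in>UNIV. \<pi> s a * (\<Sum>s'\<in>UNIV. P s a s'))"
    unfolding trans_kernel_def sum_distrib_left by (rule sum.swap)
  ultimately show ?thesis
    using \<pi> prob_simplex_sum[OF P_stoch]
    by (simp add: prob_simplex_def policies_def)
qed

lemma cost_bounds: "\<pi> \<in> policies \<Longrightarrow> 0 \<le> cost \<pi> s \<and> cost \<pi> s \<le> 1"
  unfolding cost_def policies_def using R_range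
  by (auto intro!: prob_simplex_weighted_le prob_simplex_weighted_ge)

lemma state_prob_Suc_last:
  "state_prob P \<pi> s (Suc t) s' = (\<Sum>z\<in>UNIV. state_prob P \<pi> s t z * trans_kernel \<pi> z s')"
  by (simp add: trans_kernel_def)

declare state_prob.simps(2) [simp del]

lemma state_prob_simplex: "\<pi> \<in> policies \<Longrightarrow> state_prob P \<pi> s t \<in> prob_simplex"
proof (induction t)
  case 0
  then show ?case by (auto simp: prob_simplex_def)
next
  case (Suc t)
  have "0 \<le> state_prob P \<pi> s (Suc t) s'" for s'
    unfolding state_prob_Suc_last using Suc
    by (intro sum_nonneg mult_nonneg_nonneg) (auto intro: prob_simplex_nonneg trans_kernel_simplex)
  moreover have "(\<Sum>s'\<in>UNIV. state_prob P \<pi> s (Suc t) s')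
      = (\<Sum>z\<in>UNIV. state_prob P \<pi> s t z * (\<Sum>s'\<in>UNIV. trans_kernel \<pi> z s'))"
    unfolding state_prob_Suc_last sum_distrib_left by (rule sum.swap)
  ultimately show ?case
    using Suc prob_simplex_sum[OF trans_kernel_simplex] prob_simplex_sum[of "state_prob P \<pi> s t"]
    by (simp add: prob_simplex_def)
qed

lemma state_prob_Suc_first:
  "state_prob P \<pi> s (Suc t) s' = (\<Sum>z\<in>UNIV. trans_kernel \<pi> s z * state_prob P \<pi> z t s')"
proof (induction t arbitrary: s')
  case 0
  then show ?case by (simp add: state_prob_Suc_last if_distrib if_distribR mult.commute cong: if_cong)
next
  case (Suc t)
  have "state_prob P \<pi> s (Suc (Suc t)) s'
      = (\<Sum>z\<in>UNIV. (\<Sum>w\<in>UNIV. trans_kernel \<pi> s w * state_prob P \<pi> w t z) * trans_kernel \<pi> z s')"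
    by (simp add: state_prob_Suc_last[of _ _ "Suc t"] Suc.IH)
  also have "\<dots> = (\<Sum>w\<in>UNIV. trans_kernel \<pi> s w * (\<Sum>z\<in>UNIV. state_prob P \<pi> w t z * trans_kernel \<pi> z s'))"
    unfolding sum_distrib_left sum_distrib_right mult.assoc by (rule sum.swap)
  finally show ?case by (simp add: state_prob_Suc_last)
qed

lemma expect_0: "expect \<pi> s 0 f = f s"
  by (simp add: expect_def if_distrib if_distribR cong: if_cong)

lemma expect_Suc_first: "expect \<pi> s (Suc t) f = (\<Sum>z\<in>UNIV. trans_kernel \<pi> s z * expect \<pi> z t f)"
  unfolding expect_def state_prob_Suc_first sum_distrib_right sum_distrib_left mult.assoc
  by (rule sum.swap)

lemma expect_Suc_last: "expect \<pi> s (Suc t) f = expect \<pi> s t (\<lambda>y. \<Sum>z\<in>UNIV. trans_kernel \<pi> y z * f z)"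
  unfolding expect_def state_prob_Suc_last sum_distrib_right sum_distrib_left mult.assoc
  by (rule sum.swap)

lemma expect_add: "expect \<pi> s t (\<lambda>y. f y + g y) = expect \<pi> s t f + expect \<pi> s t g"
  by (simp add: expect_def algebra_simps sum.distrib)

lemma expect_diff: "expect \<pi> s t (\<lambda>y. f y - g y) = expect \<pi> s t f - expect \<pi> s t g"
  by (simp add: expect_def algebra_simps sum_subtractf)

lemma expect_cmult: "expect \<pi> s t (\<lambda>y. c * f y) = c * expect \<pi> s t f"
  by (simp add: expect_def algebra_simps sum_distrib_left)

lemma summable_expect:
  assumes "\<pi> \<in> policies" "\<And>y. \<bar>f y\<bar> \<le> B"
  shows "summable (\<lambda>t. \<gamma> ^ t * expect \<pi> s t f)"
  using gamma assms unfolding expect_def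
  by (intro summable_geometric_times_bounded prob_simplex_weighted_abs_le state_prob_simplex) auto

lemma V_eq_expect: "V P R \<gamma> \<pi> s = (\<Sum>t. \<gamma> ^ t * expect \<pi> s t (cost \<pi>))"
  by (simp add: V_def expect_def cost_def)

lemma summable_V: "\<pi> \<in> policies \<Longrightarrow> summable (\<lambda>t. \<gamma> ^ t * expect \<pi> s t (cost \<pi>))"
  using cost_bounds by (intro summable_expect[where B = 1]) auto

lemma V_Bellman:
  assumes \<pi>: "\<pi> \<in> policies"
  shows "V P R \<gamma> \<pi> s = cost \<pi> s + \<gamma> * (\<Sum>z\<in>UNIV. trans_kernel \<pi> s z * V P R \<gamma> \<pi> z)"
proof -
  let ?g = "\<lambda>s t. \<gamma> ^ t * expect \<pi> s t (cost \<pi>)"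
  have "V P R \<gamma> \<pi> s = (\<Sum>t. ?g s (Suc t)) + ?g s 0"
    unfolding V_eq_expect using suminf_split_head[OF summable_V[OF \<pi>]] by simp
  also have "(\<Sum>t. ?g s (Suc t)) = (\<Sum>t. \<gamma> * (\<Sum>z\<in>UNIV. trans_kernel \<pi> s z * ?g z t))"
    by (simp add: expect_Suc_first sum_distrib_left algebra_simps)
  also have "\<dots> = \<gamma> * (\<Sum>t. \<Sum>z\<in>UNIV. trans_kernel \<pi> s z * ?g z t)"
    by (intro suminf_mult summable_sum summable_mult summable_V[OF \<pi>])
  also have "(\<Sum>t. \<Sum>z\<in>UNIV. trans_kernel \<pi> s z * ?g z t) = (\<Sum>z\<in>UNIV. trans_kernel \<pi> s z * (\<Sum>t. ?g z t))"
    using summable_V[OF \<pi>] by (simp add: suminf_sum summable_mult suminf_mult)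
  finally show ?thesis by (simp add: V_eq_expect expect_0)
qed

lemma weighted_Q_eq:
  "(\<Sum>a\<in>UNIV. \<pi>' s a * Q P R \<gamma> \<pi> s a)
     = cost \<pi>' s + \<gamma> * (\<Sum>z\<in>UNIV. trans_kernel \<pi>' s z * V P R \<gamma> \<pi> z)"
proof -
  have "(\<Sum>z\<in>UNIV. trans_kernel \<pi>' s z * V P R \<gamma> \<pi> z)
      = (\<Sum>a\<in>UNIV. \<pi>' s a * (\<Sum>z\<in>UNIV. P s a z * V P R \<gamma> \<pi> z))"
    unfolding trans_kernel_def sum_distrib_left sum_distrib_right mult.assoc by (rule sum.swap)
  then show ?thesis
    unfolding Q_def cost_def
    by (simp add: distrib_left sum.distrib sum_distrib_left mult.left_commute)
qed

lemma V_eq_weighted_Q: "\<pi> \<in> policies \<Longrightarrow> V P R \<gamma> \<pi> s = (\<Sum>a\<in>UNIV. \<pi> s a * Q P R \<gamma> \<pi> s a)"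
  using V_Bellman weighted_Q_eq by simp

lemma state_prob_nonneg: "\<pi> \<in> policies \<Longrightarrow> 0 \<le> state_prob P \<pi> s t s'"
  using prob_simplex_nonneg[OF state_prob_simplex] .

lemma summable_state_prob:
  assumes \<pi>: "\<pi> \<in> policies"
  shows "summable (\<lambda>t. \<gamma> ^ t * state_prob P \<pi> s t s')"
  using gamma state_prob_nonneg[OF \<pi>] prob_simplex_le_one[OF state_prob_simplex[OF \<pi>]]
  by (intro summable_geometric_times_bounded[where B = 1]) auto

lemma suminf_expect_eq_visit:
  assumes \<pi>: "\<pi> \<in> policies"
  shows "(\<Sum>t. \<gamma> ^ t * expect \<pi> s t f) = (\<Sum>y\<in>UNIV. visit P \<gamma> \<pi> s y * f y) / (1 - \<gamma>)"
proof -
  have "(\<Sum>t. \<gamma> ^ t * expect \<pi> s t f) = (\<Sum>t. \<Sum>y\<in>UNIV. (\<gamma> ^ t * state_prob P \<pi> s t y) * f y)"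
    by (simp add: expect_def sum_distrib_left mult.assoc)
  also have "\<dots> = (\<Sum>y\<in>UNIV. (\<Sum>t. \<gamma> ^ t * state_prob P \<pi> s t y) * f y)"
    using summable_state_prob[OF \<pi>] by (simp add: suminf_sum summable_mult2 suminf_mult2)
  also have "\<dots> = (\<Sum>y\<in>UNIV. visit P \<gamma> \<pi> s y * f y) / (1 - \<gamma>)"
    using gamma by (simp add: visit_def sum_divide_distrib)
  finally show ?thesis .
qed

lemma visit_simplex:
  assumes \<pi>: "\<pi> \<in> policies"
  shows "visit P \<gamma> \<pi> s \<in> prob_simplex"
proof -
  have "0 \<le> visit P \<gamma> \<pi> s y" for y
    unfolding visit_def using gamma state_prob_nonneg[OF \<pi>]
    by (intro mult_nonneg_nonneg suminf_nonneg summable_state_prob \<pi>) auto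
  moreover have "(\<Sum>y\<in>UNIV. visit P \<gamma> \<pi> s y) = 1"
  proof -
    have "expect \<pi> s t (\<lambda>_. 1) = 1" for t
      using prob_simplex_sum[OF state_prob_simplex[OF \<pi>]] by (simp add: expect_def)
    then have "(\<Sum>y\<in>UNIV. visit P \<gamma> \<pi> s y) / (1 - \<gamma>) = (\<Sum>t. \<gamma> ^ t)"
      using suminf_expect_eq_visit[OF \<pi>, of s "\<lambda>_. 1"] by simp
    also have "\<dots> = 1 / (1 - \<gamma>)" using gamma by (simp add: suminf_geometric)
    finally show ?thesis using gamma by simp
  qed
  ultimately show ?thesis by (simp add: prob_simplex_def)
qed

lemma visit_diagonal_ge:
  assumes \<pi>: "\<pi> \<in> policies"
  shows "1 - \<gamma> \<le> visit P \<gamma> \<pi> s s"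
proof -
  have "(\<Sum>t\<in>{0}. \<gamma> ^ t * state_prob P \<pi> s t s) \<le> (\<Sum>t. \<gamma> ^ t * state_prob P \<pi> s t s)"
    using gamma state_prob_nonneg[OF \<pi>]
    by (intro sum_le_suminf summable_state_prob \<pi>) auto
  then show ?thesis unfolding visit_def using gamma by simp
qed

lemma visit_rho_simplex:
  assumes \<pi>: "\<pi> \<in> policies" and \<rho>: "\<rho> \<in> prob_simplex"
  shows "visit_rho P \<gamma> \<rho> \<pi> \<in> prob_simplex"
proof -
  have "0 \<le> visit_rho P \<gamma> \<rho> \<pi> y" for y
    unfolding visit_rho_def using visit_simplex[OF \<pi>] \<rho>
    by (intro sum_nonneg mult_nonneg_nonneg) (auto intro: prob_simplex_nonneg)
  moreover have "(\<Sum>y\<in>UNIV. visit_rho P \<gamma> \<rho> \<pi> y) = (\<Sum>s\<in>UNIV. \<rho> s * (\<Sum>y\<in>UNIV. visit P \<gamma> \<pi> s y))"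
    unfolding visit_rho_def sum_distrib_left by (rule sum.swap)
  ultimately show ?thesis
    using prob_simplex_sum[OF visit_simplex[OF \<pi>]] prob_simplex_sum[OF \<rho>]
    by (simp add: prob_simplex_def)
qed

lemma visit_rho_ge:
  assumes \<pi>: "\<pi> \<in> policies" and \<rho>: "\<rho> \<in> prob_simplex"
  shows "(1 - \<gamma>) * \<rho> y \<le> visit_rho P \<gamma> \<rho> \<pi> y"
proof -
  have "(1 - \<gamma>) * \<rho> y \<le> \<rho> y * visit P \<gamma> \<pi> y y"
    using visit_diagonal_ge[OF \<pi>] prob_simplex_nonneg[OF \<rho>] by (simp add: mult.commute mult_left_mono)
  also have "\<dots> \<le> visit_rho P \<gamma> \<rho> \<pi> y"
    unfolding visit_rho_def using visit_simplex[OF \<pi>] \<rho>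
    by (intro member_le_sum mult_nonneg_nonneg) (auto intro: prob_simplex_nonneg)
  finally show ?thesis .
qed

lemma V_bounds:
  assumes \<pi>: "\<pi> \<in> policies"
  shows "0 \<le> V P R \<gamma> \<pi> s \<and> V P R \<gamma> \<pi> s \<le> 1 / (1 - \<gamma>)"
proof -
  let ?X = "\<Sum>y\<in>UNIV. visit P \<gamma> \<pi> s y * cost \<pi> y"
  have "0 \<le> ?X" "?X \<le> 1"
    using cost_bounds[OF \<pi>] visit_simplex[OF \<pi>]
    by (auto intro: prob_simplex_weighted_le prob_simplex_weighted_ge)
  then show ?thesis
    using gamma by (simp add: V_eq_expect suminf_expect_eq_visit[OF \<pi>] divide_right_mono)
qed

lemma V_rho_bounds:
  "\<pi> \<in> policies \<Longrightarrow> \<rho> \<in> prob_simplex \<Longrightarrow> 0 \<le> V_rho P R \<gamma> \<rho> \<pi> \<and> V_rho P R \<gamma> \<rho> \<pi> \<le> 1 / (1 - \<gamma>)"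
  unfolding V_rho_def using V_bounds
  by (auto intro: prob_simplex_weighted_le prob_simplex_weighted_ge)

lemma V_rho_star_eq_optimal:
  assumes "\<pi>star \<in> policies" and "\<And>\<pi> s. \<pi> \<in> policies \<Longrightarrow> V P R \<gamma> \<pi>star s \<le> V P R \<gamma> \<pi> s"
    and "\<rho> \<in> prob_simplex"
  shows "V_rho_star P R \<gamma> \<rho> = V_rho P R \<gamma> \<rho> \<pi>star"
proof -
  have "V_rho P R \<gamma> \<rho> \<pi>star \<le> V_rho P R \<gamma> \<rho> \<pi>" if "\<pi> \<in> policies" for \<pi>
    unfolding V_rho_def using assms that
    by (intro sum_mono mult_left_mono) (auto intro: prob_simplex_nonneg)
  then show ?thesis
    unfolding V_rho_star_def using assms(1) by (intro cInf_eq_minimum) auto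
qed

lemma performance_difference_state:
  assumes \<pi>: "\<pi> \<in> policies" and \<pi>': "\<pi>' \<in> policies"
  shows "V P R \<gamma> \<pi>' s - V P R \<gamma> \<pi> s =
    (\<Sum>y\<in>UNIV. visit P \<gamma> \<pi>' s y * (\<Sum>a\<in>UNIV. (\<pi>' y a - \<pi> y a) * Q P R \<gamma> \<pi> y a)) / (1 - \<gamma>)"
proof -
  define A where "A y = (\<Sum>a\<in>UNIV. \<pi>' y a * Q P R \<gamma> \<pi> y a)" for y
  define W where "W t = \<gamma> ^ t * expect \<pi>' s t (V P R \<gamma> \<pi>)" for t
  have V_abs: "\<bar>V P R \<gamma> \<pi> y\<bar> \<le> 1 / (1 - \<gamma>)" for y
    using V_bounds[OF \<pi>] by auto
  \<comment> \<open>along the trajectory of \<open>\<pi>'\<close>, \<open>A - V \<pi>\<close> is the cost of \<open>\<pi>'\<close> plus a telescoping term\<close>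
  have telescope: "\<gamma> ^ t * expect \<pi>' s t (\<lambda>y. A y - V P R \<gamma> \<pi> y)
      = \<gamma> ^ t * expect \<pi>' s t (cost \<pi>') + (W (Suc t) - W t)" for t
  proof -
    have "expect \<pi>' s t A = expect \<pi>' s t (cost \<pi>') + \<gamma> * expect \<pi>' s (Suc t) (V P R \<gamma> \<pi>)"
      unfolding A_def weighted_Q_eq expect_add expect_cmult expect_Suc_last ..
    then show ?thesis unfolding expect_diff W_def by (simp add: algebra_simps)
  qed
  have "(\<lambda>t. \<gamma> ^ t * expect \<pi>' s t (cost \<pi>')) sums V P R \<gamma> \<pi>' s"
    unfolding V_eq_expect using summable_V[OF \<pi>'] by (simp add: summable_sums)
  moreover have "W \<longlonglongrightarrow> 0"
    unfolding W_def by (rule summable_LIMSEQ_zero) (rule summable_expect[OF \<pi>' V_abs])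
  then have "(\<lambda>t. W (Suc t) - W t) sums (0 - W 0)" by (rule telescope_sums)
  ultimately have "(\<lambda>t. \<gamma> ^ t * expect \<pi>' s t (\<lambda>y. A y - V P R \<gamma> \<pi> y))
      sums (V P R \<gamma> \<pi>' s - V P R \<gamma> \<pi> s)"
    unfolding telescope using sums_add by (fastforce simp: W_def expect_0)
  then have "V P R \<gamma> \<pi>' s - V P R \<gamma> \<pi> s = (\<Sum>t. \<gamma> ^ t * expect \<pi>' s t (\<lambda>y. A y - V P R \<gamma> \<pi> y))"
    by (simp add: sums_iff)
  also have "\<dots> = (\<Sum>y\<in>UNIV. visit P \<gamma> \<pi>' s y * (A y - V P R \<gamma> \<pi> y)) / (1 - \<gamma>)"
    by (rule suminf_expect_eq_visit[OF \<pi>'])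
  also have "\<dots> = (\<Sum>y\<in>UNIV. visit P \<gamma> \<pi>' s y * (\<Sum>a\<in>UNIV. (\<pi>' y a - \<pi> y a) * Q P R \<gamma> \<pi> y a)) / (1 - \<gamma>)"
    unfolding A_def V_eq_weighted_Q[OF \<pi>] by (simp add: left_diff_distrib sum_subtractf)
  finally show ?thesis .
qed

lemma performance_difference:
  assumes \<pi>: "\<pi> \<in> policies" and \<pi>': "\<pi>' \<in> policies"
  shows "V_rho P R \<gamma> \<rho> \<pi>' - V_rho P R \<gamma> \<rho> \<pi> =
    (\<Sum>y\<in>UNIV. visit_rho P \<gamma> \<rho> \<pi>' y * (\<Sum>a\<in>UNIV. (\<pi>' y a - \<pi> y a) * Q P R \<gamma> \<pi> y a)) / (1 - \<gamma>)"
proof -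
  have "V_rho P R \<gamma> \<rho> \<pi>' - V_rho P R \<gamma> \<rho> \<pi> = (\<Sum>s\<in>UNIV. \<rho> s * (V P R \<gamma> \<pi>' s - V P R \<gamma> \<pi> s))"
    by (simp add: V_rho_def algebra_simps sum_subtractf)
  also have "\<dots> = (\<Sum>s\<in>UNIV. \<Sum>y\<in>UNIV. \<rho> s * visit P \<gamma> \<pi>' s y
                     * (\<Sum>a\<in>UNIV. (\<pi>' y a - \<pi> y a) * Q P R \<gamma> \<pi> y a)) / (1 - \<gamma>)"
    unfolding performance_difference_state[OF \<pi> \<pi>']
    by (simp add: sum_divide_distrib sum_distrib_left mult.assoc)
  also have "\<dots> = (\<Sum>y\<in>UNIV. visit_rho P \<gamma> \<rho> \<pi>' y
                     * (\<Sum>a\<in>UNIV. (\<pi>' y a - \<pi> y a) * Q P R \<gamma> \<pi> y a)) / (1 - \<gamma>)"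
    unfolding visit_rho_def sum_distrib_right by (subst sum.swap) (rule refl)
  finally show ?thesis .
qed

end

section \<open>Convex functions of Legendre type\<close>

lemma has_derivative_imp_gderiv:
  fixes f :: "'x::euclidean_space \<Rightarrow> real"
  assumes f: "(f has_derivative D) (at x)"
  shows "GDERIV f x :> adjoint D 1"
proof -
  have "linear D" using f by (rule has_derivative_linear)
  then have "D = (\<lambda>v. v \<bullet> adjoint D 1)" by (simp add: adjoint_works fun_eq_iff)
  then show ?thesis using f unfolding gderiv_def by simp
qed

abbreviation real_of_efun :: "('x \<Rightarrow> ereal) \<Rightarrow> 'x \<Rightarrow> real" where
  "real_of_efun h \<equiv> \<lambda>y. real_of_ereal (h y)"

lemma gderiv_grad:
  assumes "real_of_efun h differentiable (at x)"
  shows "GDERIV (real_of_efun h) x :> grad h x"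
proof -
  have "\<exists>g. GDERIV (real_of_efun h) x :> g"
    using assms has_derivative_imp_gderiv by (auto simp: differentiable_def)
  then show ?thesis unfolding grad_def by (rule someI_ex)
qed

lemma has_derivative_directional_limit:
  fixes f :: "'x::real_normed_vector \<Rightarrow> real"
  assumes f: "(f has_derivative D) (at x)"
  shows "((\<lambda>t. (f (x + t *\<^sub>R v) - f x) / t) \<longlongrightarrow> D v) (at_right 0)"
proof -
  have line: "((\<lambda>t::real. x + t *\<^sub>R v) has_derivative (\<lambda>t. t *\<^sub>R v)) (at 0)"
    by (auto intro!: derivative_eq_intros)
  have "((\<lambda>t. f (x + t *\<^sub>R v)) has_derivative (\<lambda>t. D (t *\<^sub>R v))) (at 0)"
    using has_derivative_compose[OF line, of f D] f by simp
  moreover have "(\<lambda>t. D (t *\<^sub>R v)) = (\<lambda>t. t * D v)"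
    using has_derivative_linear[OF f] by (simp add: linear_scale)
  ultimately have "((\<lambda>t. f (x + t *\<^sub>R v)) has_real_derivative D v) (at 0)"
    unfolding has_field_derivative_def by (simp add: mult.commute[of _ "D v"])
  then have "((\<lambda>t. (f (x + t *\<^sub>R v) - f x) / t) \<longlongrightarrow> D v) (at 0)"
    unfolding DERIV_def by simp
  then show ?thesis by (rule tendsto_mono[OF at_le, rotated]) simp
qed

lemma convex_on_gradient_inequality:
  fixes f :: "'x::real_inner \<Rightarrow> real"
  assumes f: "convex_on S f" and x: "x \<in> S" and y: "y \<in> S"
    and d: "(f has_derivative (\<lambda>v. v \<bullet> g)) (at x)"
  shows "f x + (y - x) \<bullet> g \<le> f y"
proof -
  have "\<forall>\<^sub>F t in at_right 0. (f (x + t *\<^sub>R (y - x)) - f x) / t \<le> f y - f x"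
    unfolding eventually_at_right_field
  proof (intro exI[of _ 1] conjI allI impI)
    fix t :: real assume t: "0 < t" "t < 1"
    have "f ((1 - t) *\<^sub>R x + t *\<^sub>R y) \<le> (1 - t) * f x + t * f y"
      using t by (intro convex_onD[OF f] x y) auto
    moreover have "x + t *\<^sub>R (y - x) = (1 - t) *\<^sub>R x + t *\<^sub>R y" by (simp add: algebra_simps)
    ultimately have "f (x + t *\<^sub>R (y - x)) - f x \<le> t * (f y - f x)" by (simp add: algebra_simps)
    then show "(f (x + t *\<^sub>R (y - x)) - f x) / t \<le> f y - f x"
      using t by (simp add: divide_simps mult.commute)
  qed simp
  then have "(y - x) \<bullet> g \<le> f y - f x"
    by (intro tendsto_upperbound[OF has_derivative_directional_limit[OF d]]) simp_all
  then show ?thesis by simp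
qed

lemma has_derivative_nonneg_at_segment_min:
  fixes f :: "'x::real_normed_vector \<Rightarrow> real"
  assumes d: "(f has_derivative D) (at x)"
    and min: "\<And>t. 0 < t \<Longrightarrow> t < 1 \<Longrightarrow> f x \<le> f (x + t *\<^sub>R v)"
  shows "0 \<le> D v"
proof -
  have "\<forall>\<^sub>F t in at_right 0. 0 \<le> (f (x + t *\<^sub>R v) - f x) / t"
    unfolding eventually_at_right_field
    by (intro exI[of _ 1] conjI allI impI) (auto intro!: divide_nonneg_pos min)
  then show ?thesis
    by (intro tendsto_lowerbound[OF has_derivative_directional_limit[OF d]]) simp_all
qed

context
  fixes h :: "'x::euclidean_space \<Rightarrow> ereal"
  assumes leg: "legendre h"
begin

lemma legendre_convex_dom: "convex (edom h)"
  using leg by (simp add: legendre_def)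

lemma legendre_convex_on: "convex_on (edom h) (real_of_efun h)"
  using leg by (simp add: legendre_def)

lemma legendre_has_derivative:
  "x \<in> interior (edom h) \<Longrightarrow> (real_of_efun h has_derivative (\<lambda>v. v \<bullet> grad h x)) (at x)"
  using leg gderiv_grad[of h x] unfolding legendre_def gderiv_def by blast

lemma legendre_gradient_inequality:
  "x \<in> interior (edom h) \<Longrightarrow> y \<in> edom h
    \<Longrightarrow> real_of_efun h x + (y - x) \<bullet> grad h x \<le> real_of_efun h y"
  by (rule convex_on_gradient_inequality[OF legendre_convex_on _ _ legendre_has_derivative])
     (auto dest: interior_subset[THEN subsetD])

lemma legendre_grad_blowup:
  "(\<And>n. X n \<in> interior (edom h)) \<Longrightarrow> X \<longlonglongrightarrow> x \<Longrightarrow> x \<notin> interior (edom h)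
    \<Longrightarrow> filterlim (\<lambda>n. norm (grad h (X n))) at_top sequentially"
  using leg unfolding legendre_def by blast

lemma legendre_bounded_above_cball:
  assumes "cball q r \<subseteq> interior (edom h)"
  obtains B where "\<And>z. z \<in> cball q r \<Longrightarrow> real_of_efun h z \<le> B"
proof -
  have "convex_on (interior (edom h)) (real_of_efun h)"
    using convex_on_subset[OF legendre_convex_on interior_subset]
      convex_interior[OF legendre_convex_dom] by blast
  then have "continuous_on (interior (edom h)) (real_of_efun h)"
    by (intro convex_on_continuous) auto
  then have "compact (real_of_efun h ` cball q r)"
    using assms by (intro compact_continuous_image) (auto intro: continuous_on_subset)
  then obtain B where "\<forall>y\<in>real_of_efun h ` cball q r. norm y \<le> B"
    by (auto dest!: compact_imp_bounded simp: bounded_iff)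
  then show ?thesis using that by (metis abs_le_D1 image_eqI real_norm_def)
qed

lemma legendre_grad_norm_bound:
  assumes x: "x \<in> interior (edom h)" and r: "0 \<le> r" and ball: "cball q r \<subseteq> edom h"
    and B: "\<And>z. z \<in> cball q r \<Longrightarrow> real_of_efun h z \<le> B"
  shows "r * norm (grad h x) + (q - x) \<bullet> grad h x \<le> B - real_of_efun h x"
proof -
  let ?g = "grad h x"
  define z where "z = (if ?g = 0 then q else q + (r / norm ?g) *\<^sub>R ?g)"
  have z: "z \<in> cball q r" using r by (auto simp: z_def dist_norm)
  have "(z - x) \<bullet> ?g = (q - x) \<bullet> ?g + r * norm ?g"
    by (auto simp: z_def inner_diff_left inner_add_left power2_norm_eq_inner[symmetric]
                   power2_eq_square)
  then show ?thesis
    using legendre_gradient_inequality[OF x, of z] B[OF z] ball z by auto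
qed

lemma legendre_segment_grad_bound:
  assumes p: "p \<in> edom h" and q: "q \<in> interior (edom h)"
    and r: "0 \<le> r" "cball q r \<subseteq> edom h" and B: "\<And>z. z \<in> cball q r \<Longrightarrow> real_of_efun h z \<le> B"
    and t: "0 < t" "t < 1" and x: "x = p + t *\<^sub>R (q - p)" "x \<in> interior (edom h)"
    and min: "real_of_efun h p + c \<bullet> p \<le> real_of_efun h x + c \<bullet> x"
  shows "r * norm (grad h x)
    \<le> B - (real_of_efun h q - norm (p - q) * norm (grad h q)) + \<bar>c \<bullet> (q - p)\<bar>"
proof -
  let ?g = "grad h x"
  have xq: "x - q = (1 - t) *\<^sub>R (p - q)" by (simp add: x algebra_simps)
  have "\<bar>(x - q) \<bullet> grad h q\<bar> \<le> norm (p - q) * norm (grad h q)"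
    using Cauchy_Schwarz_ineq2[of "x - q" "grad h q"] t
    by (simp add: xq mult_left_le_one_le mult_right_mono order_trans)
  then have low: "real_of_efun h q - norm (p - q) * norm (grad h q) \<le> real_of_efun h x"
    using legendre_gradient_inequality[OF q, of x] x(2) interior_subset by fastforce
  \<comment> \<open>the minimality of \<open>p\<close> bounds the gradient at \<open>x\<close> in the direction \<open>q - p\<close> from below\<close>
  have "real_of_efun h x + (p - x) \<bullet> ?g \<le> real_of_efun h p"
    using legendre_gradient_inequality[OF x(2) p] .
  then have "0 \<le> t * ((q - p) \<bullet> ?g + c \<bullet> (q - p))"
    using min by (simp add: x algebra_simps inner_add_right)
  then have "- (c \<bullet> (q - p)) \<le> (q - p) \<bullet> ?g"
    using t by (simp add: zero_le_mult_iff)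
  then have "(1 - t) * (- (c \<bullet> (q - p))) \<le> (1 - t) * ((q - p) \<bullet> ?g)"
    using t by (intro mult_left_mono) auto
  also have "\<dots> = (q - x) \<bullet> ?g"
    by (simp add: x algebra_simps inner_diff_left)
  finally have "(1 - t) * (- (c \<bullet> (q - p))) \<le> (q - x) \<bullet> ?g" .
  moreover have "\<bar>(1 - t) * (c \<bullet> (q - p))\<bar> \<le> \<bar>c \<bullet> (q - p)\<bar>"
    using t by (simp add: abs_mult mult_left_le_one_le)
  moreover have "r * norm ?g + (q - x) \<bullet> ?g \<le> B - real_of_efun h x"
    using r by (intro legendre_grad_norm_bound x B) auto
  ultimately show ?thesis using low by linarith
qed

text \<open>If \<open>p\<close> were a boundary point, essential smoothness would make the gradients along the
  segment towards \<open>q\<close> blow up, contradicting \<open>legendre_segment_grad_bound\<close>.\<close>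

lemma legendre_segment_min_interior:
  assumes p: "p \<in> edom h" and q: "q \<in> interior (edom h)"
    and min: "\<And>t. 0 < t \<Longrightarrow> t < 1 \<Longrightarrow>
      real_of_efun h p + c \<bullet> p \<le> real_of_efun h (p + t *\<^sub>R (q - p)) + c \<bullet> (p + t *\<^sub>R (q - p))"
  shows "p \<in> interior (edom h)"
proof (rule ccontr)
  assume p_bd: "p \<notin> interior (edom h)"
  define t :: "nat \<Rightarrow> real" where "t n = 1 / (2 + real n)" for n
  have t: "0 < t n" "t n < 1" for n by (auto simp: t_def divide_simps)
  define X where "X n = p + t n *\<^sub>R (q - p)" for n
  have X_int: "X n \<in> interior (edom h)" for n
  proof -
    have "open_segment q p \<subseteq> interior (edom h)"
      using legendre_convex_dom q p closure_subset by (intro in_interior_closure_convex_segment) auto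
    moreover have "X n = (1 - (1 - t n)) *\<^sub>R q + (1 - t n) *\<^sub>R p" by (simp add: X_def algebra_simps)
    then have "X n \<in> open_segment q p"
      using p_bd q t[of n] unfolding in_segment by (intro conjI exI[of _ "1 - t n"]) auto
    ultimately show ?thesis by auto
  qed
  have "filterlim (\<lambda>n. 2 + real n) at_top sequentially"
    by (rule filterlim_tendsto_add_at_top[OF tendsto_const filterlim_real_sequentially])
  then have "t \<longlonglongrightarrow> 0" unfolding t_def by (rule real_tendsto_divide_at_top[OF tendsto_const])
  then have "X \<longlonglongrightarrow> p + 0 *\<^sub>R (q - p)" unfolding X_def by (intro tendsto_intros)
  then have blowup: "filterlim (\<lambda>n. norm (grad h (X n))) at_top sequentially"
    using legendre_grad_blowup[OF X_int] p_bd by simp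
  obtain r where r: "0 < r" "cball q r \<subseteq> interior (edom h)"
    using q open_interior open_contains_cball by blast
  obtain B where B: "\<And>z. z \<in> cball q r \<Longrightarrow> real_of_efun h z \<le> B"
    using legendre_bounded_above_cball[OF r(2)] by blast
  define K where "K = B - (real_of_efun h q - norm (p - q) * norm (grad h q)) + \<bar>c \<bullet> (q - p)\<bar>"
  have "r * norm (grad h (X n)) \<le> K" for n
    unfolding K_def using r order_trans[OF r(2) interior_subset] t[of n] X_int[of n] min[OF t]
    by (intro legendre_segment_grad_bound[OF p q _ _ B]) (auto simp: X_def)
  then have "norm (grad h (X n)) \<le> K / r" for n
    using r(1) by (simp add: field_simps mult.commute)
  moreover obtain n where "K / r + 1 \<le> norm (grad h (X n))"
    using blowup unfolding filterlim_at_top eventually_sequentially by blast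
  ultimately show False by (metis add_le_same_cancel1 not_one_le_zero order_trans)
qed

end

section \<open>Bregman divergences on the probability simplex\<close>

lemma vec_of_nth [simp]: "vec_of p $ a = p a"
  by (simp add: vec_of_def)

lemma inner_vec_of: "vec_of u \<bullet> vec_of v = (\<Sum>a\<in>UNIV. u a * v a)"
  by (simp add: inner_vec_def)

lemma vec_of_segment:
  "vec_of p + t *\<^sub>R (vec_of q - vec_of p) = vec_of (\<lambda>a. p a + t * (q a - p a))"
  by (simp add: vec_eq_iff)

lemma bregman_self [simp]: "bregman h p p = 0"
  by (simp add: bregman_def)

lemma vec_of_positive_in_rel_interior:
  fixes u :: "'a::finite \<Rightarrow> real"
  assumes u: "u \<in> prob_simplex" and pos: "\<And>a. 0 < u a"
  shows "vec_of u \<in> rel_interior (vec_of ` (prob_simplex :: ('a \<Rightarrow> real) set))"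
proof -
  let ?S = "vec_of ` (prob_simplex :: ('a \<Rightarrow> real) set)"
  let ?H = "{x::real^'a. (\<chi> i. 1) \<bullet> x = 1}"
  have H: "(\<chi> i. 1) \<bullet> x = (\<Sum>i\<in>UNIV. x $ i)" for x :: "real^'a"
    by (simp add: inner_vec_def)
  have "?S \<subseteq> ?H" by (auto simp: H prob_simplex_def)
  then have aff: "affine hull ?S \<subseteq> ?H" by (intro hull_minimal affine_hyperplane)
  define e where "e = Min (range u)"
  have e: "0 < e" unfolding e_def using pos by (subst Min_gr_iff) auto
  have "ball (vec_of u) e \<inter> affine hull ?S \<subseteq> ?S"
  proof
    fix y assume y: "y \<in> ball (vec_of u) e \<inter> affine hull ?S"
    have "0 \<le> y $ i" for i
    proof -
      have "\<bar>(vec_of u - y) $ i\<bar> < e"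
        using component_le_norm_cart[of "vec_of u - y" i] y by (simp add: dist_norm)
      moreover have "e \<le> u i" unfolding e_def by (rule Min_le) auto
      ultimately show ?thesis by simp
    qed
    moreover have "(\<Sum>i\<in>UNIV. y $ i) = 1" using y aff by (auto simp: H)
    ultimately have "(\<lambda>i. y $ i) \<in> prob_simplex" by (simp add: prob_simplex_def)
    moreover have "y = vec_of (\<lambda>i. y $ i)" by (simp add: vec_eq_iff)
    ultimately show "y \<in> ?S" by blast
  qed
  then show ?thesis using u e by (auto simp: mem_rel_interior_ball)
qed

definition mirror_step ::
    "(real ^ 'a::finite \<Rightarrow> ereal) \<Rightarrow> real \<Rightarrow> ('a \<Rightarrow> real) \<Rightarrow> ('a \<Rightarrow> real) \<Rightarrow> ('a \<Rightarrow> real) \<Rightarrow> bool" where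
  "mirror_step h \<eta> g p p' \<longleftrightarrow> p' \<in> prob_simplex \<and>
     (\<forall>q\<in>prob_simplex. \<eta> * (\<Sum>a\<in>UNIV. g a * p' a) + bregman h p' p
                        \<le> \<eta> * (\<Sum>a\<in>UNIV. g a * q a) + bregman h q p)"

lemma mirror_step_linearized:
  assumes "mirror_step h \<eta> g p p'" and q: "q \<in> prob_simplex"
  defines "c \<equiv> \<eta> *\<^sub>R vec_of g - grad h (vec_of p)"
  shows "real_of_efun h (vec_of p') + c \<bullet> vec_of p' \<le> real_of_efun h (vec_of q) + c \<bullet> vec_of q"
proof -
  have "\<eta> * (\<Sum>a\<in>UNIV. g a * p' a) + bregman h p' p \<le> \<eta> * (\<Sum>a\<in>UNIV. g a * q a) + bregman h q p"
    using assms(1) q unfolding mirror_step_def by blast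
  then show ?thesis
    unfolding bregman_def c_def inner_vec_of[symmetric]
    by (simp add: inner_diff_left inner_diff_right inner_commute algebra_simps)
qed

context
  fixes h :: "real ^ 'a::finite \<Rightarrow> ereal"
  assumes leg: "legendre h"
    and h_dom: "vec_of ` prob_simplex \<subseteq> edom h"
    and h_rint: "rel_interior (vec_of ` (prob_simplex :: ('a \<Rightarrow> real) set)) \<subseteq> rel_interior (edom h)"
begin

lemma vec_of_positive_in_interior:
  assumes "u \<in> prob_simplex" "\<And>a. 0 < u a"
  shows "vec_of u \<in> interior (edom h)"
proof -
  have "vec_of u \<in> rel_interior (edom h)"
    using vec_of_positive_in_rel_interior[OF assms] h_rint by blast
  moreover have "interior (edom h) \<noteq> {}" using leg by (simp add: legendre_def)
  ultimately show ?thesis by (simp add: rel_interior_nonempty_interior)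
qed

lemma bregman_nonneg:
  "p \<in> prob_simplex \<Longrightarrow> vec_of p' \<in> interior (edom h) \<Longrightarrow> 0 \<le> bregman h p p'"
  using legendre_gradient_inequality[OF leg, of "vec_of p'" "vec_of p"] h_dom
  unfolding bregman_def by (auto simp: inner_commute)

text \<open>The uniform distribution is an interior point towards which the linearized mirror step
  objective cannot decrease, so essential smoothness keeps the step inside \<open>interior (edom h)\<close>.\<close>

lemma mirror_step_interior:
  assumes step: "mirror_step h \<eta> g p p'"
  shows "vec_of p' \<in> interior (edom h)"
proof -
  define u :: "'a \<Rightarrow> real" where "u a = 1 / real CARD('a)" for a
  have u: "u \<in> prob_simplex" "\<And>a. 0 < u a" by (auto simp: u_def prob_simplex_def)
  have p': "p' \<in> prob_simplex" using step by (simp add: mirror_step_def)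
  show ?thesis
  proof (rule legendre_segment_min_interior[OF leg _ vec_of_positive_in_interior[OF u]])
    show "vec_of p' \<in> edom h" using p' h_dom by blast
    fix t :: real assume "0 < t" "t < 1"
    then show "real_of_efun h (vec_of p') + (\<eta> *\<^sub>R vec_of g - grad h (vec_of p)) \<bullet> vec_of p'
      \<le> real_of_efun h (vec_of p' + t *\<^sub>R (vec_of u - vec_of p'))
        + (\<eta> *\<^sub>R vec_of g - grad h (vec_of p)) \<bullet> (vec_of p' + t *\<^sub>R (vec_of u - vec_of p'))"
      unfolding vec_of_segment by (intro mirror_step_linearized step prob_simplex_segment p' u) auto
  qed
qed

lemma three_point_inequality:
  assumes step: "mirror_step h \<eta> g p p'" and q: "q \<in> prob_simplex"
  shows "\<eta> * (\<Sum>a\<in>UNIV. g a * p' a) + bregman h p' p + bregman h q p'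
    \<le> \<eta> * (\<Sum>a\<in>UNIV. g a * q a) + bregman h q p"
proof -
  define c where "c = \<eta> *\<^sub>R vec_of g - grad h (vec_of p)"
  have p': "p' \<in> prob_simplex" using step by (simp add: mirror_step_def)
  have "((\<lambda>x. real_of_efun h x + c \<bullet> x) has_derivative (\<lambda>v. v \<bullet> grad h (vec_of p') + v \<bullet> c))
          (at (vec_of p'))"
    by (intro has_derivative_add legendre_has_derivative[OF leg] mirror_step_interior[OF step])
       (auto intro!: derivative_eq_intros simp: inner_commute)
  then have "0 \<le> (vec_of q - vec_of p') \<bullet> grad h (vec_of p') + (vec_of q - vec_of p') \<bullet> c"
  proof (rule has_derivative_nonneg_at_segment_min)
    fix t :: real assume "0 < t" "t < 1"
    then show "real_of_efun h (vec_of p') + c \<bullet> vec_of p'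
      \<le> real_of_efun h (vec_of p' + t *\<^sub>R (vec_of q - vec_of p'))
        + c \<bullet> (vec_of p' + t *\<^sub>R (vec_of q - vec_of p'))"
      unfolding vec_of_segment c_def
      by (intro mirror_step_linearized step prob_simplex_segment p' q) auto
  qed
  then show ?thesis
    unfolding bregman_def c_def inner_vec_of[symmetric]
    by (simp add: inner_diff_left inner_diff_right inner_commute algebra_simps)
qed

end

section \<open>Linear convergence of inexact policy mirror descent\<close>

lemma linear_recurrence_bound:
  fixes x :: "nat \<Rightarrow> real"
  assumes step: "\<And>k. x (Suc k) \<le> r * x k + e" and r: "0 \<le> r" "r < 1" and e: "0 \<le> e"
  shows "x k \<le> r ^ k * x 0 + e / (1 - r)"
proof (induction k)
  case 0
  then show ?case using r e by simp
next
  case (Suc k)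
  have "x (Suc k) \<le> r * (r ^ k * x 0 + e / (1 - r)) + e"
    using step[of k] mult_left_mono[OF Suc r(1)] by linarith
  also have "\<dots> = r ^ Suc k * x 0 + e / (1 - r)" using r by (simp add: field_simps)
  finally show ?case .
qed

locale inexact_pmd = mdp P R \<gamma>
  for P :: "'s::finite \<Rightarrow> 'a::finite \<Rightarrow> 's \<Rightarrow> real" and R \<gamma> +
  fixes \<tau> :: real and \<rho> :: "'s \<Rightarrow> real" and h :: "real ^ 'a \<Rightarrow> ereal"
    and \<pi>star :: "'s \<Rightarrow> 'a \<Rightarrow> real" and \<pi> :: "nat \<Rightarrow> 's \<Rightarrow> 'a \<Rightarrow> real"
    and Qhat :: "nat \<Rightarrow> 's \<Rightarrow> 'a \<Rightarrow> real" and \<eta> :: "nat \<Rightarrow> real"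
  assumes h_leg: "legendre h"
    and h_dom: "vec_of ` prob_simplex \<subseteq> edom h"
    and h_rint: "rel_interior (vec_of ` (prob_simplex :: ('a \<Rightarrow> real) set)) \<subseteq> rel_interior (edom h)"
    and opt_policy: "\<pi>star \<in> policies"
    and opt: "\<And>\<pi>' s. \<pi>' \<in> policies \<Longrightarrow> V P R \<gamma> \<pi>star s \<le> V P R \<gamma> \<pi>' s"
    and init: "\<pi> 0 \<in> rint_policies"
    and update: "\<And>k s. mirror_step h (\<eta> k) (Qhat k s) (\<pi> k s) (\<pi> (Suc k) s)"
    and err: "\<And>k s a. \<bar>Qhat k s a - Q P R \<gamma> (\<pi> k) s a\<bar> \<le> \<tau>"
    and rho: "\<rho> \<in> prob_simplex"
    and eta_pos: "\<And>k. 0 < \<eta> k"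
    and eta_growth: "\<And>k. \<eta> k / \<gamma> \<le> \<eta> (Suc k)"
begin

abbreviation d_star :: "'s \<Rightarrow> real" where
  "d_star \<equiv> visit_rho P \<gamma> \<rho> \<pi>star"

definition gap :: "nat \<Rightarrow> real" where
  "gap k = V_rho P R \<gamma> \<rho> (\<pi> k) - V_rho P R \<gamma> \<rho> \<pi>star"

definition Dstar :: "nat \<Rightarrow> real" where
  "Dstar k = (\<Sum>s\<in>UNIV. d_star s * bregman h (\<pi>star s) (\<pi> k s))"

definition est_improvement :: "nat \<Rightarrow> 's \<Rightarrow> real" where
  "est_improvement k s = (\<Sum>a\<in>UNIV. (\<pi> (Suc k) s a - \<pi> k s a) * Qhat k s a)"

lemma tau_nonneg: "0 \<le> \<tau>"
  using err[of 0] abs_ge_zero order_trans by blast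

lemma iterate_policy: "\<pi> k \<in> policies"
  using init update by (cases k) (auto simp: rint_policies_def policies_def mirror_step_def)

lemma iterate_simplex: "\<pi> k s \<in> prob_simplex"
  using iterate_policy by (simp add: policies_def)

lemma opt_simplex: "\<pi>star s \<in> prob_simplex"
  using opt_policy by (simp add: policies_def)

lemma d_star_simplex: "d_star \<in> prob_simplex"
  by (rule visit_rho_simplex[OF opt_policy rho])

lemma iterate_interior: "vec_of (\<pi> k s) \<in> interior (edom h)"
proof (cases k)
  case 0
  then show ?thesis
    using init vec_of_positive_in_interior[OF h_leg h_dom h_rint, of "\<pi> 0 s"]
    by (auto simp: rint_policies_def policies_def)
next
  case (Suc j)
  then show ?thesis using mirror_step_interior[OF h_leg h_dom h_rint update] by simp
qed

lemma bregman_iterate_nonneg: "p \<in> prob_simplex \<Longrightarrow> 0 \<le> bregman h p (\<pi> k s)"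
  by (rule bregman_nonneg[OF h_leg h_dom h_rint _ iterate_interior])

lemma Dstar_nonneg: "0 \<le> Dstar k"
  unfolding Dstar_def using d_star_simplex
  by (intro sum_nonneg mult_nonneg_nonneg bregman_iterate_nonneg opt_simplex)
     (auto intro: prob_simplex_nonneg)

lemma gap_le: "gap k \<le> 1 / (1 - \<gamma>)"
  using V_rho_bounds[OF iterate_policy[of k] rho] V_rho_bounds[OF opt_policy rho]
  unfolding gap_def by linarith

lemma est_improvement_nonpos: "est_improvement k s \<le> 0"
proof -
  have "\<eta> k * (\<Sum>a\<in>UNIV. Qhat k s a * \<pi> (Suc k) s a) + bregman h (\<pi> (Suc k) s) (\<pi> k s)
          + bregman h (\<pi> k s) (\<pi> (Suc k) s) \<le> \<eta> k * (\<Sum>a\<in>UNIV. Qhat k s a * \<pi> k s a)"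
    using three_point_inequality[OF h_leg h_dom h_rint update[of k s] iterate_simplex[of k s]]
    by simp
  then have "\<eta> k * est_improvement k s \<le> 0"
    using bregman_iterate_nonneg[OF iterate_simplex, of "Suc k" s k s]
      bregman_iterate_nonneg[OF iterate_simplex, of k s "Suc k" s]
    by (simp add: est_improvement_def algebra_simps sum_subtractf sum_distrib_left)
  then show ?thesis using eta_pos[of k] by (simp add: mult_le_0_iff)
qed

text \<open>Since \<open>est_improvement k\<close> is nonpositive, the visitation distribution of the new policy
  in the performance difference may be replaced by the smaller \<open>(1 - \<gamma>) * \<rho>\<close>, and then \<open>\<rho>\<close>
  by the smaller \<open>d_star / M\<close>.\<close>

lemma gap_Suc_le:
  assumes M: "0 < M" "\<And>s. d_star s \<le> M * \<rho> s"
  shows "gap (Suc k) - gap k \<le> (\<Sum>s\<in>UNIV. d_star s * est_improvement k s) / M + 2 * \<tau> / (1 - \<gamma>)"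
proof -
  define d' where "d' = visit_rho P \<gamma> \<rho> (\<pi> (Suc k))"
  have d': "d' \<in> prob_simplex" unfolding d'_def by (rule visit_rho_simplex[OF iterate_policy rho])
  let ?A = "est_improvement k"
  have "(\<Sum>a\<in>UNIV. (\<pi> (Suc k) s a - \<pi> k s a) * Q P R \<gamma> (\<pi> k) s a) \<le> ?A s + 2 * \<tau>" for s
    using prob_simplex_diff_weighted_error[where f = "Qhat k s" and g = "Q P R \<gamma> (\<pi> k) s",
        OF iterate_simplex[of "Suc k" s] iterate_simplex[of k s] err]
    unfolding est_improvement_def by (simp add: abs_le_iff)
  then have "(\<Sum>y\<in>UNIV. d' y * (\<Sum>a\<in>UNIV. (\<pi> (Suc k) y a - \<pi> k y a) * Q P R \<gamma> (\<pi> k) y a))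
      \<le> (\<Sum>y\<in>UNIV. d' y * (?A y + 2 * \<tau>))"
    by (intro sum_mono mult_left_mono prob_simplex_nonneg[OF d'])
  then have "(gap (Suc k) - gap k) * (1 - \<gamma>) \<le> (\<Sum>y\<in>UNIV. d' y * (?A y + 2 * \<tau>))"
    using performance_difference[OF iterate_policy[of k] iterate_policy[of "Suc k"], of \<rho>] gamma
    unfolding gap_def d'_def by simp
  also have "\<dots> = (\<Sum>y\<in>UNIV. d' y * ?A y) + 2 * \<tau>"
    using prob_simplex_sum[OF d'] by (simp add: distrib_left sum.distrib sum_distrib_right[symmetric])
  also have "(\<Sum>y\<in>UNIV. d' y * ?A y) \<le> (\<Sum>y\<in>UNIV. ((1 - \<gamma>) * \<rho> y) * ?A y)"
    unfolding d'_def
    by (intro sum_mono mult_right_mono_neg est_improvement_nonpos visit_rho_ge iterate_policy rho)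
  also have "\<dots> = (1 - \<gamma>) * (\<Sum>y\<in>UNIV. \<rho> y * ?A y)"
    by (simp add: sum_distrib_left mult.assoc)
  finally have "gap (Suc k) - gap k \<le> (\<Sum>y\<in>UNIV. \<rho> y * ?A y) + 2 * \<tau> / (1 - \<gamma>)"
    using gamma by (simp add: field_simps)
  moreover have "M * (\<Sum>y\<in>UNIV. \<rho> y * ?A y) \<le> (\<Sum>s\<in>UNIV. d_star s * ?A s)"
    unfolding sum_distrib_left mult.assoc[symmetric]
    by (intro sum_mono mult_right_mono_neg est_improvement_nonpos M(2))
  then have "(\<Sum>y\<in>UNIV. \<rho> y * ?A y) \<le> (\<Sum>s\<in>UNIV. d_star s * ?A s) / M"
    using M(1) by (simp add: field_simps)
  ultimately show ?thesis by linarith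
qed

lemma d_star_weighted_advantage_eq_gap:
  "(\<Sum>s\<in>UNIV. d_star s * (\<Sum>a\<in>UNIV. (\<pi> k s a - \<pi>star s a) * Q P R \<gamma> (\<pi> k) s a))
     = (1 - \<gamma>) * gap k"
proof -
  have "- gap k = (\<Sum>s\<in>UNIV. d_star s * (\<Sum>a\<in>UNIV. (\<pi>star s a - \<pi> k s a) * Q P R \<gamma> (\<pi> k) s a))
                   / (1 - \<gamma>)"
    using performance_difference[OF iterate_policy[of k] opt_policy, of \<rho>] unfolding gap_def by simp
  also have "(\<Sum>s\<in>UNIV. d_star s * (\<Sum>a\<in>UNIV. (\<pi>star s a - \<pi> k s a) * Q P R \<gamma> (\<pi> k) s a))
      = - (\<Sum>s\<in>UNIV. d_star s * (\<Sum>a\<in>UNIV. (\<pi> k s a - \<pi>star s a) * Q P R \<gamma> (\<pi> k) s a))"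
    by (simp add: sum_negf[symmetric] left_diff_distrib sum_subtractf right_diff_distrib)
  finally show ?thesis using gamma by (simp add: field_simps)
qed

lemma mirror_step_descent:
  "\<eta> k * (est_improvement k s + (\<Sum>a\<in>UNIV. (\<pi> k s a - \<pi>star s a) * Q P R \<gamma> (\<pi> k) s a) - 2 * \<tau>)
     \<le> bregman h (\<pi>star s) (\<pi> k s) - bregman h (\<pi>star s) (\<pi> (Suc k) s)"
proof -
  let ?B = "\<Sum>a\<in>UNIV. (\<pi> k s a - \<pi>star s a) * Qhat k s a"
  have "?B \<ge> (\<Sum>a\<in>UNIV. (\<pi> k s a - \<pi>star s a) * Q P R \<gamma> (\<pi> k) s a) - 2 * \<tau>"
    using prob_simplex_diff_weighted_error[where f = "Qhat k s" and g = "Q P R \<gamma> (\<pi> k) s",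
        OF iterate_simplex[of k s] opt_simplex[of s] err]
    by (simp add: abs_le_iff)
  then have "\<eta> k * (est_improvement k s + (\<Sum>a\<in>UNIV. (\<pi> k s a - \<pi>star s a) * Q P R \<gamma> (\<pi> k) s a) - 2 * \<tau>)
      \<le> \<eta> k * (est_improvement k s + ?B)"
    using eta_pos[of k] by (intro mult_left_mono) auto
  also have "\<dots> = \<eta> k * (\<Sum>a\<in>UNIV. Qhat k s a * \<pi> (Suc k) s a) - \<eta> k * (\<Sum>a\<in>UNIV. Qhat k s a * \<pi>star s a)"
    by (simp add: est_improvement_def algebra_simps sum_subtractf sum.distrib)
  also have "\<dots> \<le> bregman h (\<pi>star s) (\<pi> k s) - bregman h (\<pi>star s) (\<pi> (Suc k) s)"
    using three_point_inequality[OF h_leg h_dom h_rint update[of k s] opt_simplex[of s]]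
      bregman_iterate_nonneg[OF iterate_simplex, of "Suc k" s k s]
    by linarith
  finally show ?thesis .
qed

lemma Dstar_Suc_le:
  "(\<Sum>s\<in>UNIV. d_star s * est_improvement k s) + (1 - \<gamma>) * gap k - 2 * \<tau>
     \<le> (Dstar k - Dstar (Suc k)) / \<eta> k"
proof -
  let ?B = "\<lambda>s. \<Sum>a\<in>UNIV. (\<pi> k s a - \<pi>star s a) * Q P R \<gamma> (\<pi> k) s a"
  have "(\<Sum>s\<in>UNIV. d_star s * (\<eta> k * (est_improvement k s + ?B s - 2 * \<tau>)))
      = \<eta> k * ((\<Sum>s\<in>UNIV. d_star s * est_improvement k s) + (\<Sum>s\<in>UNIV. d_star s * ?B s)
                 - 2 * \<tau> * (\<Sum>s\<in>UNIV. d_star s))"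
    by (simp add: algebra_simps sum.distrib sum_subtractf sum_distrib_left)
  then have "\<eta> k * ((\<Sum>s\<in>UNIV. d_star s * est_improvement k s) + (1 - \<gamma>) * gap k - 2 * \<tau>)
      = (\<Sum>s\<in>UNIV. d_star s * (\<eta> k * (est_improvement k s + ?B s - 2 * \<tau>)))"
    by (simp add: d_star_weighted_advantage_eq_gap prob_simplex_sum[OF d_star_simplex])
  also have "\<dots> \<le> (\<Sum>s\<in>UNIV. d_star s * (bregman h (\<pi>star s) (\<pi> k s) - bregman h (\<pi>star s) (\<pi> (Suc k) s)))"
    by (intro sum_mono mult_left_mono mirror_step_descent prob_simplex_nonneg[OF d_star_simplex])
  also have "\<dots> = Dstar k - Dstar (Suc k)"
    unfolding Dstar_def by (simp add: right_diff_distrib sum_subtractf)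
  finally show ?thesis using eta_pos[of k] by (simp add: field_simps)
qed

definition potential :: "real \<Rightarrow> nat \<Rightarrow> real" where
  "potential M k = gap k + Dstar k / ((M - (1 - \<gamma>)) * \<eta> k)"

text \<open>With this weight of the divergence, the growth condition on \<open>\<eta>\<close> is exactly what makes
  the divergence term contract at the same rate \<open>1 - (1 - \<gamma>) / M\<close> as the gap.\<close>

lemma potential_Suc_le:
  assumes M: "1 \<le> M" "\<And>s. d_star s \<le> M * \<rho> s"
  shows "potential M (Suc k)
    \<le> (1 - (1 - \<gamma>) / M) * potential M k + (2 * \<tau> / (1 - \<gamma>) + 2 * \<tau> / M)"
proof -
  define c where "c = M - (1 - \<gamma>)"
  define X where "X = (\<Sum>s\<in>UNIV. d_star s * est_improvement k s)"
  have M_pos: "0 < M" and c_pos: "0 < c" using M(1) gamma by (auto simp: c_def)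
  have rate: "1 - (1 - \<gamma>) / M = c / M" using M_pos by (simp add: c_def field_simps)
  have "X \<le> (Dstar k - Dstar (Suc k)) / \<eta> k - (1 - \<gamma>) * gap k + 2 * \<tau>"
    using Dstar_Suc_le[of k] unfolding X_def by linarith
  then have "X / M \<le> ((Dstar k - Dstar (Suc k)) / \<eta> k - (1 - \<gamma>) * gap k + 2 * \<tau>) / M"
    using M_pos by (simp add: divide_right_mono)
  also have "\<dots> = Dstar k / (M * \<eta> k) - Dstar (Suc k) / (M * \<eta> k) - (1 - \<gamma>) / M * gap k + 2 * \<tau> / M"
    using M_pos eta_pos[of k] by (simp add: field_simps)
  finally have "X / M \<le> Dstar k / (M * \<eta> k) - Dstar (Suc k) / (M * \<eta> k)
      - (1 - \<gamma>) / M * gap k + 2 * \<tau> / M" .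
  moreover have "gap k - (1 - \<gamma>) / M * gap k = c / M * gap k"
    using M_pos by (simp add: c_def field_simps)
  ultimately have "gap (Suc k) \<le> c / M * gap k + Dstar k / (M * \<eta> k) - Dstar (Suc k) / (M * \<eta> k)
      + (2 * \<tau> / (1 - \<gamma>) + 2 * \<tau> / M)"
    using gap_Suc_le[OF M_pos M(2), of k] unfolding X_def by linarith
  moreover have "M * \<eta> k \<le> c * \<eta> (Suc k)"
  proof -
    have "0 \<le> (1 - \<gamma>) * (M - 1)" using M(1) gamma by simp
    then have "\<gamma> * M \<le> c" by (simp add: c_def algebra_simps)
    moreover have "\<eta> k \<le> \<gamma> * \<eta> (Suc k)"
      using eta_growth[of k] gamma by (simp add: divide_le_eq mult.commute)
    ultimately have "M * \<eta> k \<le> (\<gamma> * M) * \<eta> (Suc k)"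
      using M_pos by (simp add: mult_left_mono)
    also have "\<dots> \<le> c * \<eta> (Suc k)"
      using \<open>\<gamma> * M \<le> c\<close> eta_pos[of "Suc k"] by (intro mult_right_mono) auto
    finally show ?thesis .
  qed
  then have "Dstar (Suc k) / (c * \<eta> (Suc k)) \<le> Dstar (Suc k) / (M * \<eta> k)"
    using Dstar_nonneg M_pos c_pos eta_pos by (intro divide_left_mono mult_pos_pos) auto
  moreover have "c / M * (Dstar k / (c * \<eta> k)) = Dstar k / (M * \<eta> k)"
    using c_pos by simp
  ultimately show ?thesis
    unfolding potential_def rate c_def[symmetric] by (simp add: distrib_left)
qed

lemma gap_bound:
  assumes eta0: "(1 - \<gamma>) / \<gamma> * Dstar 0 \<le> \<eta> 0"
    and M: "1 \<le> M" "\<And>s. d_star s \<le> M * \<rho> s"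
  shows "gap k \<le> (1 - (1 - \<gamma>) / M) ^ k * (2 / (1 - \<gamma>)) + 4 * (M / (1 - \<gamma>)) / (1 - \<gamma>) * \<tau>"
proof -
  define r where "r = 1 - (1 - \<gamma>) / M"
  define e where "e = 2 * \<tau> / (1 - \<gamma>) + 2 * \<tau> / M"
  have c_pos: "0 < M - (1 - \<gamma>)" using M(1) gamma by simp
  have r: "0 \<le> r" "r < 1" unfolding r_def using M(1) gamma by (auto simp: field_simps)
  have e: "0 \<le> e" unfolding e_def using tau_nonneg gamma M(1) by simp
  have "potential M k \<le> r ^ k * potential M 0 + e / (1 - r)"
    by (rule linear_recurrence_bound[where x = "potential M", OF potential_Suc_le[OF M, folded r_def e_def] r e])
  moreover have "gap k \<le> potential M k"
    unfolding potential_def using Dstar_nonneg[of k] c_pos eta_pos[of k] by simp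
  moreover have "potential M 0 \<le> 2 / (1 - \<gamma>)"
  proof -
    have "(1 - \<gamma>) * Dstar 0 \<le> \<gamma> * \<eta> 0"
      using eta0 gamma by (simp add: field_simps)
    also have "\<dots> \<le> (M - (1 - \<gamma>)) * \<eta> 0"
      using M(1) gamma eta_pos[of 0] by (intro mult_right_mono) auto
    finally have "Dstar 0 / ((M - (1 - \<gamma>)) * \<eta> 0) \<le> 1 / (1 - \<gamma>)"
      using c_pos eta_pos[of 0] gamma by (simp add: divide_simps mult.commute)
    then show ?thesis using gap_le[of 0] unfolding potential_def by simp
  qed
  moreover have "e / (1 - r) \<le> 4 * (M / (1 - \<gamma>)) / (1 - \<gamma>) * \<tau>"
  proof -
    have "e / (1 - r) = e * (M / (1 - \<gamma>))" by (simp add: r_def)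
    also have "\<dots> = 2 * \<tau> / (1 - \<gamma>) * (M / (1 - \<gamma>)) + 2 * \<tau> / (1 - \<gamma>)"
      using M(1) unfolding e_def distrib_right by simp
    finally have "e / (1 - r) = 2 * \<tau> / (1 - \<gamma>) * (M / (1 - \<gamma>)) + 2 * \<tau> / (1 - \<gamma>)" .
    moreover have "2 * \<tau> / (1 - \<gamma>) \<le> 2 * \<tau> / (1 - \<gamma>) * (M / (1 - \<gamma>))"
      using mult_left_mono[of 1 "M / (1 - \<gamma>)" "2 * \<tau> / (1 - \<gamma>)"] tau_nonneg gamma M(1)
      by simp
    moreover have "4 * (M / (1 - \<gamma>)) / (1 - \<gamma>) * \<tau> = 2 * (2 * \<tau> / (1 - \<gamma>) * (M / (1 - \<gamma>)))"
      by simp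
    ultimately show ?thesis by linarith
  qed
  ultimately show ?thesis
    using mult_left_mono[of "potential M 0" "2 / (1 - \<gamma>)" "r ^ k"] r unfolding r_def by simp
qed

end

lemma ereal_rate_finite:
  fixes c M \<tau> :: real
  assumes c: "0 < c" and M: "0 < M"
  shows "(let \<theta> = ereal M / ereal c in (1 - 1 / \<theta>) ^ k * ereal (2 / c) + 4 * \<theta> / ereal c * ereal \<tau>)
    = ereal ((1 - c / M) ^ k * (2 / c) + 4 * (M / c) / c * \<tau>)"
proof -
  have "ereal M / ereal c = ereal (M / c)" using c by (simp add: ereal_divide)
  moreover have "1 - 1 / ereal (M / c) = ereal (1 - c / M)"
    using c M by (simp add: one_ereal_def ereal_divide)
  ultimately show ?thesis using c by (simp add: Let_def ereal_divide ereal_power)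
qed

text \<open>For \<open>\<theta> = \<infinity>\<close> the rate \<open>1 - 1 / \<theta>\<close> is \<open>1\<close>, and the error term is \<open>0\<close> if \<open>\<tau> = 0\<close>
  (as \<open>\<infinity> * 0 = 0\<close> in \<open>ereal\<close>) and \<open>\<infinity>\<close> otherwise.\<close>

lemma ereal_rate_infinite:
  fixes c \<tau> x :: real
  assumes c: "0 < c" and \<tau>: "0 \<le> \<tau>" and x: "x \<le> 2 / c"
  shows "ereal x \<le> (let \<theta> = \<infinity> / ereal c in (1 - 1 / \<theta>) ^ k * ereal (2 / c) + 4 * \<theta> / ereal c * ereal \<tau>)"
proof (cases "\<tau> = 0")
  case True
  then show ?thesis using c x by (simp add: Let_def)
next
  case False
  then show ?thesis using c \<tau> by (simp add: Let_def)
qed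

theorem theorem14:
  fixes P :: "'s::finite \<Rightarrow> 'a::finite \<Rightarrow> 's \<Rightarrow> real"
    and R :: "'s \<Rightarrow> 'a \<Rightarrow> real"
    and \<gamma> :: real and \<tau> :: real
    and \<rho> :: "'s \<Rightarrow> real"
    and h :: "real ^ 'a \<Rightarrow> ereal"
    and \<pi>star :: "'s \<Rightarrow> 'a \<Rightarrow> real"
    and \<pi> :: "nat \<Rightarrow> 's \<Rightarrow> 'a \<Rightarrow> real"
    and Qhat :: "nat \<Rightarrow> 's \<Rightarrow> 'a \<Rightarrow> real"
    and \<eta> :: "nat \<Rightarrow> real"
  assumes P_stoch: "\<And>s a. P s a \<in> prob_simplex"
    and R_range: "\<And>s a. 0 \<le> R s a \<and> R s a \<le> 1"
    and gamma: "0 < \<gamma>" "\<gamma> < 1"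
    and h_leg: "legendre h"
    and h_dom: "vec_of ` prob_simplex \<subseteq> edom h"
    and h_rint: "rel_interior (vec_of ` (prob_simplex :: ('a \<Rightarrow> real) set)) \<subseteq> rel_interior (edom h)"
    and opt: "\<pi>star \<in> policies"
             "\<And>\<pi>' s. \<pi>' \<in> policies \<Longrightarrow> V P R \<gamma> \<pi>star s \<le> V P R \<gamma> \<pi>' s"
    and init: "\<pi> 0 \<in> rint_policies"
    and update: "\<And>k s. \<pi> (Suc k) s \<in> prob_simplex \<and>
        (\<forall>p\<in>prob_simplex.
           \<eta> k * (\<Sum>a\<in>UNIV. Qhat k s a * \<pi> (Suc k) s a) + bregman h (\<pi> (Suc k) s) (\<pi> k s)
           \<le> \<eta> k * (\<Sum>a\<in>UNIV. Qhat k s a * p a) + bregman h p (\<pi> k s))"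
    and err: "\<And>k s a. \<bar>Qhat k s a - Q P R \<gamma> (\<pi> k) s a\<bar> \<le> \<tau>"
    and rho: "\<rho> \<in> prob_simplex"
    and eta_pos: "\<And>k. 0 < \<eta> k"
    and eta0: "\<eta> 0 \<ge> (1 - \<gamma>) / \<gamma> *
                 (\<Sum>s\<in>UNIV. visit_rho P \<gamma> \<rho> \<pi>star s * bregman h (\<pi>star s) (\<pi> 0 s))"
    and eta_growth: "\<And>k. \<eta> (Suc k) \<ge> \<eta> k / \<gamma>"
  shows "\<forall>k. ereal (V_rho P R \<gamma> \<rho> (\<pi> k) - V_rho_star P R \<gamma> \<rho>)
           \<le> (let \<theta> = ratio_norm (visit_rho P \<gamma> \<rho> \<pi>star) \<rho> / ereal (1 - \<gamma>)
              in (1 - 1 / \<theta>) ^ k * ereal (2 / (1 - \<gamma>))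
                 + 4 * \<theta> / ereal (1 - \<gamma>) * ereal \<tau>)"
proof
  fix k
  interpret inexact_pmd P R \<gamma> \<tau> \<rho> h \<pi>star \<pi> Qhat \<eta>
    using P_stoch R_range gamma h_leg h_dom h_rint opt init update err rho eta_pos eta_growth
    by unfold_locales (auto simp: mirror_step_def)
  have lhs: "V_rho P R \<gamma> \<rho> (\<pi> k) - V_rho_star P R \<gamma> \<rho> = gap k"
    using V_rho_star_eq_optimal[OF opt_policy opt rho] by (simp add: gap_def)
  have ratio_ge: "1 \<le> ratio_norm d_star \<rho>" by (rule ratio_norm_ge_one[OF d_star_simplex rho])
  show "ereal (V_rho P R \<gamma> \<rho> (\<pi> k) - V_rho_star P R \<gamma> \<rho>)
    \<le> (let \<theta> = ratio_norm d_star \<rho> / ereal (1 - \<gamma>)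
       in (1 - 1 / \<theta>) ^ k * ereal (2 / (1 - \<gamma>)) + 4 * \<theta> / ereal (1 - \<gamma>) * ereal \<tau>)"
  proof (cases "ratio_norm d_star \<rho>")
    case (real M)
    then have "gap k \<le> (1 - (1 - \<gamma>) / M) ^ k * (2 / (1 - \<gamma>)) + 4 * (M / (1 - \<gamma>)) / (1 - \<gamma>) * \<tau>"
      using eta0 ratio_ge prob_simplex_nonneg[OF rho]
      by (intro gap_bound ratio_norm_bound[of \<rho>]) (auto simp: Dstar_def)
    moreover have "0 < 1 - \<gamma>" "0 < M" using gamma ratio_ge real by auto
    ultimately show ?thesis unfolding real lhs by (subst ereal_rate_finite) auto
  next
    case PInf
    have "gap k \<le> 2 / (1 - \<gamma>)" using gap_le[of k] gamma by (simp add: field_simps)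
    then show ?thesis
      unfolding PInf lhs using gamma tau_nonneg by (intro ereal_rate_infinite) auto
  next
    case MInf
    then show ?thesis using ratio_ge by simp
  qed
qed

end
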